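(* Let $A$ be an integral domain and let $\mathfrak{p}$ be a prime ideal of $A$. Then $\mathfrak{p}$ is a straight prime ideal of $A$ if and only if $\mathfrak{p}$ is a locally divided prime ideal of $A$, i.e. if and only if $\mathfrak{p}A_\mathfrak{m} = \mathfrak{p}A_\mathfrak{p}$ for every maximal ideal $\mathfrak{m}$ of $A$ containing $\mathfrak{p}$.
   Context: All rings are commutative with identity. An overring of a domain $A$ is a ring $B$ with $A\subseteq B\subseteq \operatorname{Frac}(A)$. A prime ideal $\mathfrak{p}$ of a domain $A$ is divided if $\mathfrak{p}=\mathfrak{p}A_\mathfrak{p}$. It is locally divided if $\mathfrak{p}A_\mathfrak{m}$ is a divided prime of $A_\mathfrak{m}$ for every maximal ideal $\mathfrak{m}\supseteq\mathfrak{p}$, equivalently $\mathfrak{p}A_\mathfrak{m}=\mathfrak{p}A_\mathfrak{p}$ for all such $\mathfrak{m}$. A prime ideal $\mathfrak{p}$ of $A$ is straight (and $A$ is said to be straight at $\mathfrak{p}$) if for every overring $B$ of $A$, the $(A/\mathfrak{p})$-module $B/\mathfrak{p}B$ is torsion-free. *)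

theory Defs
  imports "HOL-Computational_Algebra.Fraction_Field"
begin

text \<open>The integral domain A is the whole type 'a (class idom); Frac(A) is the type 'a fract.
  Ideals of A are subsets of 'a; overrings and localizations are subsets of 'a fract.\<close>

definition emb :: "'a::idom \<Rightarrow> 'a fract" where
  "emb a = Fract a 1"

definition is_ideal :: "'a::comm_ring_1 set \<Rightarrow> bool" where
  "is_ideal I \<longleftrightarrow> 0 \<in> I \<and> (\<forall>x\<in>I. \<forall>y\<in>I. x + y \<in> I) \<and> (\<forall>x\<in>I. \<forall>r. r * x \<in> I)"

definition prime_ideal :: "'a::comm_ring_1 set \<Rightarrow> bool" where
  "prime_ideal P \<longleftrightarrow> is_ideal P \<and> P \<noteq> UNIV \<and> (\<forall>a b. a * b \<in> P \<longrightarrow> a \<in> P \<or> b \<in> P)"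

definition maximal_ideal :: "'a::comm_ring_1 set \<Rightarrow> bool" where
  "maximal_ideal M \<longleftrightarrow> is_ideal M \<and> M \<noteq> UNIV \<and>
     (\<forall>J. is_ideal J \<and> M \<subseteq> J \<longrightarrow> J = M \<or> J = UNIV)"

definition overring :: "'a::idom fract set \<Rightarrow> bool" where
  "overring B \<longleftrightarrow> range emb \<subseteq> B \<and> 0 \<in> B \<and> 1 \<in> B \<and>
     (\<forall>x\<in>B. \<forall>y\<in>B. x + y \<in> B \<and> x * y \<in> B) \<and> (\<forall>x\<in>B. - x \<in> B)"

definition ext_ideal :: "'a::idom set \<Rightarrow> 'a fract set \<Rightarrow> 'a fract set" where
  "ext_ideal P B = {\<Sum>i<n. emb (a i) * b i | (n::nat) a b. \<forall>i<n. a i \<in> P \<and> b i \<in> B}"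

definition localization :: "'a::idom set \<Rightarrow> 'a fract set" where
  "localization Q = {Fract a s | a s. s \<notin> Q}"

text \<open>Straight: for every overring B, B/PB is a torsion-free (A/P)-module, i.e. for
  a \<notin> P and b \<in> B, a b \<in> PB implies b \<in> PB.\<close>
definition straight :: "'a::idom set \<Rightarrow> bool" where
  "straight P \<longleftrightarrow> (\<forall>B. overring B \<longrightarrow>
     (\<forall>a b. a \<notin> P \<longrightarrow> b \<in> B \<longrightarrow> emb a * b \<in> ext_ideal P B \<longrightarrow> b \<in> ext_ideal P B))"

definition locally_divided :: "'a::idom set \<Rightarrow> bool" where
  "locally_divided P \<longleftrightarrow> (\<forall>M. maximal_ideal M \<and> P \<subseteq> M \<longrightarrow>
     ext_ideal P (localization M) = ext_ideal P (localization P))"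

end

theory Submission
  imports Defs "HOL-Computational_Algebra.Polynomial"
begin

text \<open>If \<open>P\<close> is locally divided and \<open>a b \<in> P B\<close> with \<open>a \<notin> P\<close>, then for every maximal \<open>M \<supseteq> P\<close>
  each generator \<open>q/a\<close> of \<open>P A\<^sub>P = P A\<^sub>M\<close> can be written \<open>q'/t\<close> with \<open>q' \<in> P\<close>, \<open>t \<notin> M\<close>; so the
  ideal \<open>{c. c b \<in> P B}\<close> meets the complement of every maximal ideal and contains \<open>1\<close>.

  Conversely, let \<open>P\<close> be straight, \<open>p \<in> P\<close>, \<open>s \<notin> P\<close>, \<open>M \<supseteq> P\<close> maximal, \<open>R = A\<^sub>M\<close>, \<open>I = P R\<close>
  and \<open>y = p/s\<close>. Straightness for the overrings \<open>R[1/y]\<close> (where \<open>s \<cdot> 1 = p \<cdot> 1/y\<close>) and \<open>R[y]\<close>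
  (where \<open>s \<cdot> y = p\<close>) gives \<open>1 \<in> I R[1/y]\<close> and \<open>y \<in> I R[y]\<close>. The first makes \<open>y\<close> integral
  over \<open>R\<close>, so \<open>R[y]\<close> is a finite \<open>R\<close>-module with \<open>R[y] = R + I R[y]\<close>; since \<open>I\<close> lies in the
  Jacobson radical of \<open>R\<close>, Nakayama's lemma gives \<open>y \<in> R\<close>, i.e. \<open>P A\<^sub>P \<subseteq> P A\<^sub>M\<close>.\<close>

section \<open>Subrings of a field and integral elements\<close>

definition subring :: "'b::comm_ring_1 set \<Rightarrow> bool" where
  "subring R \<longleftrightarrow> 0 \<in> R \<and> 1 \<in> R \<and> (\<forall>x\<in>R. \<forall>y\<in>R. x + y \<in> R \<and> x * y \<in> R) \<and> (\<forall>x\<in>R. - x \<in> R)"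

definition submodule :: "'b::comm_ring_1 set \<Rightarrow> 'b set \<Rightarrow> bool" where
  "submodule R C \<longleftrightarrow> 0 \<in> C \<and> (\<forall>x\<in>C. \<forall>y\<in>C. x + y \<in> C) \<and> (\<forall>r\<in>R. \<forall>x\<in>C. r * x \<in> C)"

lemma subring_zero: "subring R \<Longrightarrow> 0 \<in> R"
  and subring_one: "subring R \<Longrightarrow> 1 \<in> R"
  and subring_add: "subring R \<Longrightarrow> x \<in> R \<Longrightarrow> y \<in> R \<Longrightarrow> x + y \<in> R"
  and subring_mult: "subring R \<Longrightarrow> x \<in> R \<Longrightarrow> y \<in> R \<Longrightarrow> x * y \<in> R"
  and subring_uminus: "subring R \<Longrightarrow> x \<in> R \<Longrightarrow> - x \<in> R"
  by (simp_all add: subring_def)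

lemma submodule_zero: "submodule R C \<Longrightarrow> 0 \<in> C"
  and submodule_add: "submodule R C \<Longrightarrow> x \<in> C \<Longrightarrow> y \<in> C \<Longrightarrow> x + y \<in> C"
  and submodule_mult: "submodule R C \<Longrightarrow> r \<in> R \<Longrightarrow> x \<in> C \<Longrightarrow> r * x \<in> C"
  by (simp_all add: submodule_def)

lemma submodule_sum:
  "submodule R C \<Longrightarrow> (\<And>i. i \<in> S \<Longrightarrow> f i \<in> C) \<Longrightarrow> sum f S \<in> C"
  by (induction S rule: infinite_finite_induct) (auto intro: submodule_zero submodule_add)

lemma subring_imp_submodule: "subring R \<Longrightarrow> submodule R R"
  by (simp add: subring_def submodule_def)

lemma subring_sum: "subring R \<Longrightarrow> (\<And>i. i \<in> S \<Longrightarrow> f i \<in> R) \<Longrightarrow> sum f S \<in> R"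
  by (rule submodule_sum[OF subring_imp_submodule])

text \<open>For a subring \<open>R\<close>, \<open>adjoin R z\<close> is the ring \<open>R[z]\<close>; for an ideal \<open>I\<close> of \<open>R\<close>,
  \<open>adjoin I z\<close> is the extended ideal \<open>I R[z]\<close>.\<close>
definition adjoin :: "'b::comm_ring_1 set \<Rightarrow> 'b \<Rightarrow> 'b set" where
  "adjoin S z = {poly f z | f. \<forall>i. coeff f i \<in> S}"

lemma adjoinI: "(\<And>i. coeff f i \<in> S) \<Longrightarrow> poly f z \<in> adjoin S z"
  unfolding adjoin_def by blast

lemma adjoinE:
  assumes "x \<in> adjoin S z"
  obtains f where "\<And>i. coeff f i \<in> S" "x = poly f z"
  using assms unfolding adjoin_def by blast

lemma const_mem_adjoin: "0 \<in> S \<Longrightarrow> c \<in> S \<Longrightarrow> c \<in> adjoin S z"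
  using adjoinI[of "[:c:]" S z] by (simp add: coeff_pCons split: nat.split)

lemma var_mem_adjoin: "0 \<in> S \<Longrightarrow> 1 \<in> S \<Longrightarrow> z \<in> adjoin S z"
  using adjoinI[of "[:0, 1:]" S z] by (simp add: coeff_pCons split: nat.split)

lemma subring_adjoin:
  assumes R: "subring R"
  shows "subring (adjoin R z)"
proof -
  have "x + y \<in> adjoin R z \<and> x * y \<in> adjoin R z" if x: "x \<in> adjoin R z" and y: "y \<in> adjoin R z" for x y
  proof -
    obtain f where f: "\<And>i. coeff f i \<in> R" "x = poly f z"
      using x by (auto elim: adjoinE)
    obtain g where g: "\<And>i. coeff g i \<in> R" "y = poly g z"
      using y by (auto elim: adjoinE)
    have "coeff (f * g) n \<in> R" for n
      unfolding coeff_mult using f g R by (auto intro!: subring_sum subring_mult)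
    moreover have "coeff (f + g) n \<in> R" for n
      using f g R by (simp add: subring_add)
    ultimately show ?thesis
      using adjoinI[of "f * g"] adjoinI[of "f + g"] f g by simp
  qed
  moreover have "- x \<in> adjoin R z" if x: "x \<in> adjoin R z" for x
  proof -
    obtain f where "\<And>i. coeff f i \<in> R" "x = poly f z"
      using x by (auto elim: adjoinE)
    then show ?thesis
      using adjoinI[of "- f"] R by (simp add: subring_uminus)
  qed
  ultimately show ?thesis
    using const_mem_adjoin[of R] R unfolding subring_def by blast
qed

text \<open>\<open>y ^ n \<in> span_powers R y n\<close> says that \<open>y\<close> satisfies a monic equation of degree \<open>n\<close> over \<open>R\<close>.\<close>
definition span_powers :: "'b::comm_ring_1 set \<Rightarrow> 'b \<Rightarrow> nat \<Rightarrow> 'b set" where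
  "span_powers C y n = {\<Sum>j<n. c j * y ^ j | c. \<forall>j<n. c j \<in> C}"

lemma span_powersI: "(\<And>j. j < n \<Longrightarrow> c j \<in> C) \<Longrightarrow> (\<Sum>j<n. c j * y ^ j) \<in> span_powers C y n"
  unfolding span_powers_def by blast

lemma span_powersE:
  assumes "x \<in> span_powers C y n"
  obtains c where "\<And>j. j < n \<Longrightarrow> c j \<in> C" "x = (\<Sum>j<n. c j * y ^ j)"
  using assms unfolding span_powers_def by blast

lemma span_powers_subset: "subring R \<Longrightarrow> C \<subseteq> R \<Longrightarrow> (\<And>j. j < n \<Longrightarrow> y ^ j \<in> R) \<Longrightarrow> span_powers C y n \<subseteq> R"
  by (auto elim!: span_powersE intro!: subring_sum subring_mult)

lemma positive_if_power_mem_span_powers: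
  fixes y :: "'b::field"
  assumes "y ^ n \<in> span_powers R y n"
  shows "0 < n"
  using assms by (cases n) (auto elim: span_powersE)

lemma span_powers_add:
  assumes "submodule R C" "x \<in> span_powers C y n" "x' \<in> span_powers C y n"
  shows "x + x' \<in> span_powers C y n"
proof -
  obtain c where c: "\<And>j. j < n \<Longrightarrow> c j \<in> C" "x = (\<Sum>j<n. c j * y ^ j)"
    using assms(2) by (auto elim: span_powersE)
  obtain c' where c': "\<And>j. j < n \<Longrightarrow> c' j \<in> C" "x' = (\<Sum>j<n. c' j * y ^ j)"
    using assms(3) by (auto elim: span_powersE)
  have "x + x' = (\<Sum>j<n. (c j + c' j) * y ^ j)"
    using c(2) c'(2) by (simp add: distrib_right sum.distrib)
  then show ?thesis
    using c(1) c'(1) submodule_add[OF assms(1)] by (simp add: span_powersI)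
qed

lemma const_mem_span_powers:
  assumes "submodule R C" "0 < n" "a \<in> C"
  shows "a \<in> span_powers C y n"
proof -
  have "(\<Sum>j<n. (if j = 0 then a else 0) * y ^ j) = a"
    using assms(2) by (cases n) (simp_all only: sum.lessThan_Suc_shift, simp_all)
  then show ?thesis
    using span_powersI[of n "\<lambda>j. if j = 0 then a else 0" C y] assms(1,3) submodule_zero by force
qed

text \<open>Shift the coefficients and rewrite the top power \<open>y ^ n\<close> by the integral equation.\<close>
lemma mult_mem_span_powers:
  assumes C: "submodule R C" and y: "y ^ n \<in> span_powers R y n" and x: "x \<in> span_powers C y n"
  shows "y * x \<in> span_powers C y n"
proof (cases n)
  case 0
  then show ?thesis using x by (simp add: span_powers_def)
next
  case (Suc m)
  obtain h where h: "\<And>j. j < n \<Longrightarrow> h j \<in> R" "y ^ n = (\<Sum>j<n. h j * y ^ j)"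
    using y unfolding span_powers_def by blast
  obtain c where c: "\<And>j. j < n \<Longrightarrow> c j \<in> C" "x = (\<Sum>j<n. c j * y ^ j)"
    using x by (auto elim: span_powersE)
  define shift where "shift j = (case j of 0 \<Rightarrow> 0 | Suc i \<Rightarrow> c i)" for j
  have "y * x = (\<Sum>j<m. c j * y ^ Suc j) + c m * y ^ n"
    using Suc c(2) by (simp add: sum_distrib_left distrib_left ac_simps)
  also have "(\<Sum>j<m. c j * y ^ Suc j) = (\<Sum>j<n. shift j * y ^ j)"
    unfolding Suc sum.lessThan_Suc_shift by (simp add: shift_def)
  also have "c m * y ^ n = (\<Sum>j<n. (c m * h j) * y ^ j)"
    using h(2) by (simp add: sum_distrib_left mult.assoc)
  finally have "y * x = (\<Sum>j<n. (shift j + c m * h j) * y ^ j)"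
    by (simp add: distrib_right sum.distrib)
  moreover have "shift j + c m * h j \<in> C" if "j < n" for j
    using that Suc c(1) h(1) C
    by (auto simp: shift_def submodule_zero mult.commute[of "c m"]
        intro!: submodule_add submodule_mult split: nat.split)
  ultimately show ?thesis
    by (simp add: span_powersI)
qed

lemma poly_mem_span_powers:
  fixes y :: "'b::field"
  assumes C: "submodule R C" and y: "y ^ n \<in> span_powers R y n" and g: "\<And>i. coeff g i \<in> C"
  shows "poly g y \<in> span_powers C y n"
  using g
proof (induction g)
  case (pCons a g)
  have "poly g y \<in> span_powers C y n"
    using pCons.IH pCons.prems[of "Suc _"] by simp
  moreover have "a \<in> span_powers C y n"
    using const_mem_span_powers[OF C positive_if_power_mem_span_powers[OF y]] pCons.prems[of 0] by simp
  ultimately show ?case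
    using span_powers_add[OF C] mult_mem_span_powers[OF C y] by simp
qed (use const_mem_span_powers[OF C positive_if_power_mem_span_powers[OF y]] submodule_zero[OF C] in simp)

section \<open>Nakayama's lemma\<close>

locale jacobson_ideal =
  fixes R I :: "'b::field set"
  assumes subring: "subring R"
    and submodule: "submodule R I"
    and subset: "I \<subseteq> R"
    and one_minus_invertible: "a \<in> I \<Longrightarrow> \<exists>u\<in>R. u * (1 - a) = 1"
begin

lemma mem_R_of_mem_I: "a \<in> I \<Longrightarrow> a \<in> R"
  using subset by blast

text \<open>Nakayama's lemma in elimination form: if \<open>g i \<in> R + \<Sum>j. I g j\<close> for all \<open>i \<in> J\<close>, solve for
  one \<open>g k\<close>, which is possible as \<open>1 - a\<close> is a unit for \<open>a \<in> I\<close>, and substitute it into the others.\<close>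
lemma nakayama:
  assumes "finite J"
    and "\<And>i. i \<in> J \<Longrightarrow> \<exists>c\<in>R. \<exists>a. (\<forall>j\<in>J. a j \<in> I) \<and> g i = c + (\<Sum>j\<in>J. a j * g j)"
  shows "g ` J \<subseteq> R"
  using assms
proof (induction J rule: finite_induct)
  case empty
  then show ?case by simp
next
  case (insert k J)
  have "\<forall>i\<in>insert k J. \<exists>c a. c \<in> R \<and> (\<forall>j\<in>insert k J. a j \<in> I) \<and>
      g i = c + (\<Sum>j\<in>insert k J. a j * g j)"
    using insert.prems by blast
  then obtain c a where c: "\<And>i. i \<in> insert k J \<Longrightarrow> c i \<in> R"
    and a: "\<And>i j. i \<in> insert k J \<Longrightarrow> j \<in> insert k J \<Longrightarrow> a i j \<in> I"
    and g: "\<And>i. i \<in> insert k J \<Longrightarrow> g i = c i + (\<Sum>j\<in>insert k J. a i j * g j)"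
    by metis
  have g_split: "g i = c i + a i k * g k + (\<Sum>j\<in>J. a i j * g j)" if "i \<in> insert k J" for i
    using g[OF that] insert.hyps by (simp add: add.assoc)
  obtain u where u: "u \<in> R" "u * (1 - a k k) = 1"
    using one_minus_invertible a by blast
  have "(1 - a k k) * g k = c k + (\<Sum>j\<in>J. a k j * g j)"
    using g_split[of k] by (simp add: algebra_simps)
  then have "u * ((1 - a k k) * g k) = u * c k + (\<Sum>j\<in>J. (u * a k j) * g j)"
    by (simp add: distrib_left sum_distrib_left mult.assoc)
  then have g_k: "g k = u * c k + (\<Sum>j\<in>J. (u * a k j) * g j)"
    using u(2) by (simp add: mult.assoc[symmetric])
  have "\<exists>c\<in>R. \<exists>a. (\<forall>j\<in>J. a j \<in> I) \<and> g i = c + (\<Sum>j\<in>J. a j * g j)" if i: "i \<in> J" for i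
  proof (intro bexI exI conjI)
    have "g i = c i + a i k * g k + (\<Sum>j\<in>J. a i j * g j)"
      using g_split i by blast
    then show "g i = (c i + a i k * (u * c k)) + (\<Sum>j\<in>J. (a i j + a i k * (u * a k j)) * g j)"
      unfolding g_k by (simp add: algebra_simps sum.distrib sum_distrib_left)
    have "a i k \<in> R"
      using a i by (blast intro: mem_R_of_mem_I)
    then show "c i + a i k * (u * c k) \<in> R"
      using i u c by (simp add: subring_add[OF subring] subring_mult[OF subring])
    show "\<forall>j\<in>J. a i j + a i k * (u * a k j) \<in> I"
      using i u a mem_R_of_mem_I
      by (auto intro!: submodule_add[OF submodule] submodule_mult[OF submodule]
          simp: mult.commute[of "a i k"])
  qed
  then have "g ` J \<subseteq> R"
    using insert.IH by blast
  moreover have "g k \<in> R"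
  proof -
    have "u * a k j * g j \<in> R" if "j \<in> J" for j
      using that u a[of k j] \<open>g ` J \<subseteq> R\<close> mem_R_of_mem_I by (intro subring_mult[OF subring]) auto
    then show ?thesis
      unfolding g_k using u c[of k] by (simp add: subring_add[OF subring] subring_mult[OF subring] subring_sum[OF subring])
  qed
  ultimately show ?case by simp
qed

text \<open>Reversing \<open>1 = F(1/y)\<close> gives \<open>y ^ n = G(y)\<close> with \<open>coeff G n \<in> I\<close>; dividing by the unit
  \<open>1 - coeff G n\<close> makes the equation monic.\<close>
lemma integral_if_one_mem_adjoin_inverse:
  assumes y: "y \<noteq> 0" and one: "1 \<in> adjoin I (inverse y)"
  obtains n where "y ^ n \<in> span_powers R y n"
proof -
  obtain F where F: "\<And>i. coeff F i \<in> I" "1 = poly F (inverse y)"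
    using one unfolding adjoin_def by blast
  define n where "n = degree F"
  define G where "G = reflect_poly F"
  have G_I: "coeff G i \<in> I" for i
    using F(1) submodule_zero[OF submodule] by (simp add: G_def coeff_reflect_poly)
  have "y ^ n = poly G y"
    using poly_reflect_poly_nz[OF y, of F] F(2) by (simp add: G_def n_def)
  also have "\<dots> = poly (\<Sum>j\<le>n. monom (coeff G j) j) y"
    using poly_as_sum_of_monoms'[of G n] degree_reflect_poly_le[of F] by (simp add: G_def n_def)
  also have "\<dots> = (\<Sum>j\<le>n. coeff G j * y ^ j)"
    by (simp add: poly_sum poly_monom)
  also have "\<dots> = (\<Sum>j<n. coeff G j * y ^ j) + coeff G n * y ^ n"
    by (simp add: lessThan_Suc_atMost[symmetric])
  finally have G_n: "(1 - coeff G n) * y ^ n = (\<Sum>j<n. coeff G j * y ^ j)"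
    by (simp add: algebra_simps)
  obtain u where u: "u \<in> R" "u * (1 - coeff G n) = 1"
    using one_minus_invertible G_I by blast
  have "y ^ n = u * ((1 - coeff G n) * y ^ n)"
    using u(2) by (simp add: mult.assoc[symmetric])
  also have "\<dots> = (\<Sum>j<n. (u * coeff G j) * y ^ j)"
    unfolding G_n by (simp add: sum_distrib_left mult.assoc)
  finally have y_n: "y ^ n = (\<Sum>j<n. (u * coeff G j) * y ^ j)" .
  have "u * coeff G j \<in> R" for j
    using u(1) G_I by (auto intro: subring_mult[OF subring] mem_R_of_mem_I)
  then have "y ^ n \<in> span_powers R y n"
    unfolding y_n by (rule span_powersI)
  then show ?thesis
    by (rule that)
qed

lemma mem_if_integral_and_mem_adjoin:
  assumes integral: "y ^ n \<in> span_powers R y n" and y: "y \<in> adjoin I y"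
  shows "y \<in> R"
proof -
  obtain F where F: "\<And>i. coeff F i \<in> I" "y = poly F y"
    using y unfolding adjoin_def by blast
  have y_I: "y \<in> span_powers I y n"
    using poly_mem_span_powers[OF submodule integral F(1)] by (simp only: F(2)[symmetric])
  have powers_I: "y ^ Suc i \<in> span_powers I y n" for i
  proof (induction i)
    case (Suc i)
    then show ?case
      using mult_mem_span_powers[OF submodule integral] by simp
  qed (use y_I in simp)
  have "power y ` {..<n} \<subseteq> R"
  proof (rule nakayama)
    fix i assume "i \<in> {..<n}"
    show "\<exists>c\<in>R. \<exists>a. (\<forall>j\<in>{..<n}. a j \<in> I) \<and> y ^ i = c + (\<Sum>j\<in>{..<n}. a j * y ^ j)"
    proof (cases i)
      case 0
      show ?thesis
        using 0 subring_one[OF subring] submodule_zero[OF submodule]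
        by (intro bexI[of _ 1] exI[of _ "\<lambda>_. 0"]) simp_all
    next
      case (Suc m)
      obtain a where "\<And>j. j < n \<Longrightarrow> a j \<in> I" "y ^ i = (\<Sum>j<n. a j * y ^ j)"
        using powers_I[of m] Suc unfolding span_powers_def by blast
      then show ?thesis
        using subring_zero[OF subring] by (intro bexI[of _ 0] exI[of _ a]) simp_all
    qed
  qed simp
  then show "y \<in> R"
    using y_I span_powers_subset[OF subring subset] by blast
qed

lemma mem_if_mem_adjoin_and_one_mem_adjoin_inverse:
  assumes "y \<noteq> 0" "y \<in> adjoin I y" "1 \<in> adjoin I (inverse y)"
  shows "y \<in> R"
proof -
  obtain n where "y ^ n \<in> span_powers R y n"
    using integral_if_one_mem_adjoin_inverse assms(1,3) .
  then show ?thesis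
    using mem_if_integral_and_mem_adjoin assms(2) by blast
qed

end

section \<open>Ideals\<close>

lemma ideal_zero: "is_ideal I \<Longrightarrow> 0 \<in> I"
  and ideal_add: "is_ideal I \<Longrightarrow> x \<in> I \<Longrightarrow> y \<in> I \<Longrightarrow> x + y \<in> I"
  and ideal_mult: "is_ideal I \<Longrightarrow> x \<in> I \<Longrightarrow> r * x \<in> I"
  by (simp_all add: is_ideal_def)

lemma ideal_eq_UNIV_iff: "is_ideal I \<Longrightarrow> I = UNIV \<longleftrightarrow> 1 \<in> I"
  using ideal_mult[of I 1] by auto

lemma prime_ideal_is_ideal: "prime_ideal P \<Longrightarrow> is_ideal P"
  and prime_ideal_mult: "prime_ideal P \<Longrightarrow> s \<notin> P \<Longrightarrow> t \<notin> P \<Longrightarrow> s * t \<notin> P"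
  by (auto simp: prime_ideal_def)

lemma prime_ideal_one: "prime_ideal P \<Longrightarrow> 1 \<notin> P"
  unfolding prime_ideal_def using ideal_eq_UNIV_iff by blast

lemma prime_ideal_nonzero: "prime_ideal P \<Longrightarrow> s \<notin> P \<Longrightarrow> s \<noteq> 0"
  using ideal_zero prime_ideal_is_ideal by blast

lemma maximal_ideal_imp_prime:
  assumes M: "maximal_ideal M"
  shows "prime_ideal M"
proof -
  have ideal: "is_ideal M" and proper: "M \<noteq> UNIV"
    using M by (auto simp: maximal_ideal_def)
  have "a \<in> M \<or> b \<in> M" if ab: "a * b \<in> M" for a b
  proof (rule ccontr)
    assume not_M: "\<not> (a \<in> M \<or> b \<in> M)"
    define J where "J = {m + r * a | m r. m \<in> M}"
    have "is_ideal J"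
      unfolding is_ideal_def J_def
    proof (intro conjI ballI allI; clarify?)
      show "\<exists>m r. 0 = m + r * a \<and> m \<in> M"
        using ideal_zero[OF ideal] by (intro exI[of _ 0]) simp
    next
      fix m r m' r' assume "m \<in> M" "m' \<in> M"
      then show "\<exists>m'' r''. m + r * a + (m' + r' * a) = m'' + r'' * a \<and> m'' \<in> M"
        using ideal_add[OF ideal] by (intro exI[of _ "m + m'"] exI[of _ "r + r'"]) (simp add: algebra_simps)
    next
      fix m r s assume "m \<in> M"
      then show "\<exists>m' r'. s * (m + r * a) = m' + r' * a \<and> m' \<in> M"
        using ideal_mult[OF ideal] by (intro exI[of _ "s * m"] exI[of _ "s * r"]) (simp add: algebra_simps)
    qed
    moreover have "M \<subseteq> J"
      unfolding J_def by (force intro: exI[of _ 0])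
    moreover have "a \<in> J"
      unfolding J_def using ideal_zero[OF ideal] by (force intro: exI[of _ 1])
    ultimately have "J = UNIV"
      using M not_M unfolding maximal_ideal_def by blast
    then obtain m r where "1 = m + r * a" "m \<in> M"
      unfolding J_def by blast
    then have "b = b * m + r * (a * b)"
      by (metis mult.commute mult.left_commute distrib_left mult_1_right)
    moreover have "b * m + r * (a * b) \<in> M"
      using ideal_add[OF ideal ideal_mult[OF ideal \<open>m \<in> M\<close>] ideal_mult[OF ideal ab]] .
    ultimately show False
      using not_M by simp
  qed
  with ideal proper show ?thesis
    by (simp add: prime_ideal_def)
qed

lemma exists_maximal_ideal:
  assumes J: "is_ideal J" and "1 \<notin> J"
  obtains M where "maximal_ideal M" "J \<subseteq> M"
proof -
  define \<A> where "\<A> = {I. is_ideal I \<and> J \<subseteq> I \<and> 1 \<notin> I}"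
  have "\<Union>\<C> \<in> \<A>" if "\<C> \<noteq> {}" and chain: "subset.chain \<A> \<C>" for \<C>
  proof -
    have \<C>: "\<C> \<subseteq> \<A>" "\<And>X Y. X \<in> \<C> \<Longrightarrow> Y \<in> \<C> \<Longrightarrow> X \<subseteq> Y \<or> Y \<subseteq> X"
      using chain unfolding subset_chain_def by blast+
    have "is_ideal (\<Union>\<C>)"
      unfolding is_ideal_def
    proof (intro conjI ballI allI)
      show "0 \<in> \<Union>\<C>"
        using \<open>\<C> \<noteq> {}\<close> \<C>(1) unfolding \<A>_def by (auto intro: ideal_zero)
    next
      fix x y assume "x \<in> \<Union>\<C>" "y \<in> \<Union>\<C>"
      then obtain X Y where "X \<in> \<C>" "Y \<in> \<C>" "x \<in> X" "y \<in> Y"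
        by blast
      then show "x + y \<in> \<Union>\<C>"
        using \<C> unfolding \<A>_def by (metis UnionI ideal_add mem_Collect_eq subsetD)
    next
      fix x r assume "x \<in> \<Union>\<C>"
      then show "r * x \<in> \<Union>\<C>"
        using \<C>(1) unfolding \<A>_def by (auto intro: ideal_mult)
    qed
    then show ?thesis
      using \<open>\<C> \<noteq> {}\<close> \<C>(1) unfolding \<A>_def by blast
  qed
  moreover have "J \<in> \<A>"
    using assms unfolding \<A>_def by blast
  ultimately obtain M where M: "M \<in> \<A>" and max: "\<And>X. X \<in> \<A> \<Longrightarrow> M \<subseteq> X \<Longrightarrow> X = M"
    using subset_Zorn_nonempty[of \<A>] by blast
  have "maximal_ideal M"
    unfolding maximal_ideal_def
  proof (intro conjI allI impI)
    fix K assume "is_ideal K \<and> M \<subseteq> K"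
    then show "K = M \<or> K = UNIV"
      using M max unfolding \<A>_def by (cases "1 \<in> K") (auto simp: ideal_eq_UNIV_iff)
  qed (use M in \<open>auto simp: \<A>_def\<close>)
  with M show ?thesis
    using that unfolding \<A>_def by blast
qed

section \<open>Extended ideals and localizations\<close>

lemma emb_add: "emb (x + y) = emb x + emb y"
  and emb_diff: "emb (x - y) = emb x - emb y"
  and emb_uminus: "emb (- x) = - emb x"
  and emb_mult: "emb (x * y) = emb x * emb y"
  by (simp_all add: emb_def)

lemma emb_zero [simp]: "emb 0 = 0"
  and emb_one [simp]: "emb 1 = 1"
  by (simp_all add: emb_def Zero_fract_def One_fract_def)

lemma emb_eq_0_iff: "emb x = 0 \<longleftrightarrow> x = 0"
  by (simp add: emb_def Zero_fract_def eq_fract)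

lemma emb_inject: "emb x = emb y \<longleftrightarrow> x = y"
  by (simp add: emb_def eq_fract)

lemma localization_eq: "localization Q = {emb a / emb s | a s. s \<notin> Q}"
  by (simp add: localization_def emb_def)

lemma overring_iff: "overring B \<longleftrightarrow> range emb \<subseteq> B \<and> subring B"
  by (auto simp: overring_def subring_def)

lemma overring_emb: "overring B \<Longrightarrow> emb a \<in> B"
  by (auto simp: overring_def)

lemma overring_adjoin: "overring R \<Longrightarrow> overring (adjoin R z)"
  by (auto simp: overring_iff intro: subring_adjoin const_mem_adjoin subring_zero)

lemma ext_ideal_induct [consumes 1, case_names zero gen add]:
  assumes "x \<in> ext_ideal P B"
    and "Q 0"
    and "\<And>a b. a \<in> P \<Longrightarrow> b \<in> B \<Longrightarrow> Q (emb a * b)"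
    and "\<And>x y. Q x \<Longrightarrow> Q y \<Longrightarrow> Q (x + y)"
  shows "Q x"
proof -
  obtain n :: nat and a b where "x = (\<Sum>i<n. emb (a i) * b i)" "\<forall>i<n. a i \<in> P \<and> b i \<in> B"
    using assms(1) unfolding ext_ideal_def by blast
  moreover have "(\<forall>i<m. a i \<in> P \<and> b i \<in> B) \<Longrightarrow> Q (\<Sum>i<m. emb (a i) * b i)" for m
    by (induction m) (simp_all add: assms(2-4))
  ultimately show ?thesis by blast
qed

lemma ext_ideal_zero: "0 \<in> ext_ideal P B"
  unfolding ext_ideal_def by (intro CollectI exI[of _ 0]) simp

lemma emb_mult_mem_ext_ideal: "a \<in> P \<Longrightarrow> b \<in> B \<Longrightarrow> emb a * b \<in> ext_ideal P B"
  unfolding ext_ideal_def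
  by (intro CollectI exI[of _ 1] exI[of _ "\<lambda>_. a"] exI[of _ "\<lambda>_. b"]) simp

lemma ext_ideal_add_emb_mult:
  assumes "x \<in> ext_ideal P B" "a \<in> P" "b \<in> B"
  shows "x + emb a * b \<in> ext_ideal P B"
proof -
  obtain n :: nat and as bs where x: "x = (\<Sum>i<n. emb (as i) * bs i)" and "\<forall>i<n. as i \<in> P \<and> bs i \<in> B"
    using assms(1) unfolding ext_ideal_def by blast
  then have "x + emb a * b = (\<Sum>i<Suc n. emb ((as(n := a)) i) * (bs(n := b)) i)"
    and "\<forall>i<Suc n. (as(n := a)) i \<in> P \<and> (bs(n := b)) i \<in> B"
    using assms(2,3) by (auto simp: less_Suc_eq)
  then show ?thesis
    unfolding ext_ideal_def by blast
qed

lemma ext_ideal_add: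
  assumes "x \<in> ext_ideal P B" "y \<in> ext_ideal P B"
  shows "x + y \<in> ext_ideal P B"
  using assms(2,1)
proof (induction y arbitrary: x rule: ext_ideal_induct)
  case (add u v)
  then show ?case
    by (metis add.assoc)
qed (simp_all add: ext_ideal_add_emb_mult)

lemma ext_ideal_mult:
  assumes "subring B" "c \<in> B" "x \<in> ext_ideal P B"
  shows "c * x \<in> ext_ideal P B"
  using assms(3)
proof (induction x rule: ext_ideal_induct)
  case (gen a b)
  then have "emb a * (c * b) \<in> ext_ideal P B"
    using assms(1,2) by (simp add: emb_mult_mem_ext_ideal subring_mult)
  then show ?case
    by (simp add: ac_simps)
qed (simp_all add: ext_ideal_zero ext_ideal_add distrib_left)

lemma submodule_ext_ideal: "subring B \<Longrightarrow> submodule B (ext_ideal P B)"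
  by (simp add: submodule_def ext_ideal_zero ext_ideal_add ext_ideal_mult)

lemma ext_ideal_mono: "B \<subseteq> C \<Longrightarrow> ext_ideal P B \<subseteq> ext_ideal P C"
  unfolding ext_ideal_def by blast

lemma ext_ideal_adjoin_subset: "ext_ideal P (adjoin R z) \<subseteq> adjoin (ext_ideal P R) z"
proof
  fix x assume "x \<in> ext_ideal P (adjoin R z)"
  then show "x \<in> adjoin (ext_ideal P R) z"
  proof (induction x rule: ext_ideal_induct)
    case zero
    show ?case
      by (simp add: const_mem_adjoin ext_ideal_zero)
  next
    case (gen a b)
    then obtain f where "\<And>i. coeff f i \<in> R" "b = poly f z"
      unfolding adjoin_def by blast
    then show ?case
      using adjoinI[of "smult (emb a) f"] gen(1) by (simp add: emb_mult_mem_ext_ideal)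
  next
    case (add x y)
    then obtain f g where "\<And>i. coeff f i \<in> ext_ideal P R" "x = poly f z"
      "\<And>i. coeff g i \<in> ext_ideal P R" "y = poly g z"
      unfolding adjoin_def by blast
    then show ?case
      using adjoinI[of "f + g"] by (simp add: ext_ideal_add)
  qed
qed

lemma divide_mem_localization: "s \<notin> Q \<Longrightarrow> emb a / emb s \<in> localization Q"
  unfolding localization_eq by blast

lemma localization_antimono: "Q \<subseteq> M \<Longrightarrow> localization M \<subseteq> localization Q"
  unfolding localization_eq by blast

lemma overring_localization:
  assumes Q: "prime_ideal Q"
  shows "overring (localization Q)"
proof -
  have "x + y \<in> localization Q \<and> x * y \<in> localization Q"
    if x: "x \<in> localization Q" and y: "y \<in> localization Q" for x y
  proof -
    obtain a s b t where "x = emb a / emb s" "y = emb b / emb t" "s \<notin> Q" "t \<notin> Q"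
      using x y unfolding localization_eq by blast
    moreover from this have "s * t \<notin> Q" "emb s \<noteq> 0" "emb t \<noteq> 0"
      using Q by (simp_all add: prime_ideal_mult prime_ideal_nonzero emb_eq_0_iff)
    ultimately show ?thesis
      using divide_mem_localization[of "s * t" Q "a * t + b * s"] divide_mem_localization[of "s * t" Q "a * b"]
      by (simp add: emb_add emb_mult add_frac_eq)
  qed
  moreover have "- x \<in> localization Q" if x: "x \<in> localization Q" for x
  proof -
    obtain a s where "x = emb a / emb s" "s \<notin> Q"
      using x unfolding localization_eq by blast
    then show ?thesis
      using divide_mem_localization[of s Q "- a"] by (simp add: emb_uminus)
  qed
  moreover have "emb a \<in> localization Q" for a
    using divide_mem_localization[OF prime_ideal_one[OF Q], of a] by simp
  ultimately show ?thesis
    unfolding overring_def using emb_zero emb_one by (metis rangeE subsetI)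
qed

lemma ext_ideal_localization:
  assumes P: "is_ideal P" and M: "prime_ideal M"
  shows "ext_ideal P (localization M) = {emb q / emb t | q t. q \<in> P \<and> t \<notin> M}"
proof
  show "ext_ideal P (localization M) \<subseteq> {emb q / emb t | q t. q \<in> P \<and> t \<notin> M}"
  proof
    fix x assume "x \<in> ext_ideal P (localization M)"
    then show "x \<in> {emb q / emb t | q t. q \<in> P \<and> t \<notin> M}"
    proof (induction x rule: ext_ideal_induct)
      case zero
      show ?case
        using ideal_zero[OF P] prime_ideal_one[OF M] by (intro CollectI exI[of _ 0] exI[of _ 1]) simp
    next
      case (gen a b)
      then obtain c s where "b = emb c / emb s" "s \<notin> M"
        unfolding localization_eq by blast
      moreover have "a * c \<in> P"
        using ideal_mult[OF P gen(1), of c] by (simp add: mult.commute)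
      ultimately show ?case
        by (intro CollectI exI[of _ "a * c"] exI[of _ s]) (simp add: emb_mult)
    next
      case (add x y)
      then obtain q t q' t' where "x = emb q / emb t" "y = emb q' / emb t'" "q \<in> P" "q' \<in> P" "t \<notin> M" "t' \<notin> M"
        by blast
      moreover from this have "emb t \<noteq> 0" "emb t' \<noteq> 0" "t * t' \<notin> M"
        using M by (simp_all add: emb_eq_0_iff prime_ideal_nonzero prime_ideal_mult)
      moreover from calculation have "t' * q + t * q' \<in> P"
        using P by (simp add: ideal_add ideal_mult)
      ultimately show ?case
        by (intro CollectI exI[of _ "t' * q + t * q'"] exI[of _ "t * t'"])
          (simp add: emb_add emb_mult add_frac_eq ac_simps)
    qed
  qed
next
  show "{emb q / emb t | q t. q \<in> P \<and> t \<notin> M} \<subseteq> ext_ideal P (localization M)"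
    using emb_mult_mem_ext_ideal[OF _ divide_mem_localization, of _ P _ M 1]
    by (auto simp: emb_def)
qed

text \<open>For \<open>q \<in> P\<close> and \<open>t \<notin> M\<close>, the inverse of \<open>1 - q/t\<close> is \<open>t/(t - q)\<close>, and \<open>t - q \<notin> M\<close> as \<open>P \<subseteq> M\<close>.\<close>
lemma jacobson_ideal_localization:
  assumes P: "is_ideal P" and M: "prime_ideal M" and "P \<subseteq> M"
  shows "jacobson_ideal (localization M) (ext_ideal P (localization M))"
proof
  show "subring (localization M)"
    using overring_localization[OF M] by (simp add: overring_iff)
  then show "submodule (localization M) (ext_ideal P (localization M))"
    by (rule submodule_ext_ideal)
  show "ext_ideal P (localization M) \<subseteq> localization M"
    unfolding ext_ideal_localization[OF P M] by (auto intro: divide_mem_localization)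
  fix c assume "c \<in> ext_ideal P (localization M)"
  then obtain q t where c: "c = emb q / emb t" "q \<in> P" "t \<notin> M"
    unfolding ext_ideal_localization[OF P M] by blast
  have "t - q \<notin> M"
    using c \<open>P \<subseteq> M\<close> ideal_add[OF prime_ideal_is_ideal[OF M], of "t - q" q] by auto
  moreover have "emb t / emb (t - q) * (1 - c) = 1"
    using c(1) prime_ideal_nonzero[OF M c(3)] prime_ideal_nonzero[OF M calculation]
    by (simp add: emb_eq_0_iff emb_inject emb_diff divide_simps algebra_simps)
  ultimately show "\<exists>u\<in>localization M. u * (1 - c) = 1"
    by (blast intro: divide_mem_localization)
qed

lemma divide_mem_ext_ideal_localization:
  assumes P: "prime_ideal P" and M: "prime_ideal M"
    and "p \<in> P" "s \<notin> P" "emb p / emb s \<in> localization M"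
  shows "emb p / emb s \<in> ext_ideal P (localization M)"
proof -
  obtain c d where cd: "emb p / emb s = emb c / emb d" "d \<notin> M"
    using assms(5) unfolding localization_eq by blast
  then have "emb (p * d) = emb (c * s)"
    using prime_ideal_nonzero[OF P \<open>s \<notin> P\<close>] prime_ideal_nonzero[OF M cd(2)]
    by (simp add: emb_mult emb_eq_0_iff frac_eq_eq)
  moreover have "p * d \<in> P"
    using ideal_mult[OF prime_ideal_is_ideal[OF P] \<open>p \<in> P\<close>] by (simp add: mult.commute)
  ultimately have "c \<in> P"
    using P \<open>s \<notin> P\<close> unfolding prime_ideal_def emb_inject by metis
  then show ?thesis
    unfolding cd(1) ext_ideal_localization[OF prime_ideal_is_ideal[OF P] M] using cd(2) by blast
qed

section \<open>Straight and locally divided primes\<close>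

lemma straight_adjoin:
  assumes "straight P" "overring R" "a \<notin> P" "b \<in> adjoin R z"
    and "emb a * b \<in> ext_ideal P (adjoin R z)"
  shows "b \<in> adjoin (ext_ideal P R) z"
  using assms ext_ideal_adjoin_subset overring_adjoin unfolding straight_def by blast

lemma straight_divide_mem_localization:
  assumes P: "prime_ideal P" and straight: "straight P" and M: "prime_ideal M" and "P \<subseteq> M"
    and p: "p \<in> P" and s: "s \<notin> P"
  shows "emb p / emb s \<in> localization M"
proof -
  define R where "R = localization M"
  interpret jacobson_ideal R "ext_ideal P R"
    unfolding R_def using jacobson_ideal_localization[OF prime_ideal_is_ideal[OF P] M \<open>P \<subseteq> M\<close>] .
  have R: "overring R"
    unfolding R_def using overring_localization[OF M] .
  have s_nonzero: "emb s \<noteq> 0"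
    using prime_ideal_nonzero[OF P s] by (simp add: emb_eq_0_iff)
  define y where "y = emb p / emb s"
  have "y \<in> R" if "p \<noteq> 0"
  proof (rule mem_if_mem_adjoin_and_one_mem_adjoin_inverse)
    show "y \<noteq> 0"
      using that s_nonzero by (simp add: y_def emb_eq_0_iff)
    have "emb s * y = emb p * 1"
      using s_nonzero by (simp add: y_def)
    moreover have "emb p * 1 \<in> ext_ideal P (adjoin R y)"
      using p subring_zero[OF subring] subring_one[OF subring]
      by (intro emb_mult_mem_ext_ideal const_mem_adjoin)
    ultimately show "y \<in> adjoin (ext_ideal P R) y"
      using straight_adjoin[OF straight R s] subring_zero[OF subring] subring_one[OF subring]
      by (simp add: var_mem_adjoin)
    have "emb s * 1 = emb p * inverse y"
      using that s_nonzero by (simp add: y_def emb_eq_0_iff)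
    moreover have "emb p * inverse y \<in> ext_ideal P (adjoin R (inverse y))"
      using p subring_zero[OF subring] subring_one[OF subring]
      by (intro emb_mult_mem_ext_ideal var_mem_adjoin)
    ultimately show "1 \<in> adjoin (ext_ideal P R) (inverse y)"
      using straight_adjoin[OF straight R s] subring_zero[OF subring] subring_one[OF subring]
      by (simp add: const_mem_adjoin)
  qed
  moreover have "y \<in> R" if "p = 0"
    using that subring_zero[OF subring] by (simp add: y_def)
  ultimately show ?thesis
    unfolding R_def y_def by blast
qed

lemma straight_imp_locally_divided:
  assumes P: "prime_ideal P" and straight: "straight P"
  shows "locally_divided P"
  unfolding locally_divided_def
proof (intro allI impI)
  fix M assume "maximal_ideal M \<and> P \<subseteq> M"
  then have M: "prime_ideal M" and "P \<subseteq> M"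
    by (simp_all add: maximal_ideal_imp_prime)
  show "ext_ideal P (localization M) = ext_ideal P (localization P)"
  proof
    show "ext_ideal P (localization M) \<subseteq> ext_ideal P (localization P)"
      using \<open>P \<subseteq> M\<close> by (intro ext_ideal_mono localization_antimono)
    show "ext_ideal P (localization P) \<subseteq> ext_ideal P (localization M)"
      unfolding ext_ideal_localization[OF prime_ideal_is_ideal[OF P] P]
      using straight_divide_mem_localization[OF P straight M \<open>P \<subseteq> M\<close>]
        divide_mem_ext_ideal_localization[OF P M] by blast
  qed
qed

lemma ext_ideal_divide_clear_denominator:
  assumes P: "prime_ideal P" and M: "prime_ideal M"
    and divided: "ext_ideal P (localization M) = ext_ideal P (localization P)"
    and B: "overring B" and a: "a \<notin> P" and w: "w \<in> ext_ideal P B"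
  shows "\<exists>t. t \<notin> M \<and> emb t * (w / emb a) \<in> ext_ideal P B"
  using w
proof (induction w rule: ext_ideal_induct)
  case zero
  show ?case
    using prime_ideal_one[OF M] ext_ideal_zero by auto
next
  case (gen q d)
  have "emb q / emb a \<in> ext_ideal P (localization M)"
    unfolding divided ext_ideal_localization[OF prime_ideal_is_ideal[OF P] P] using gen(1) a by blast
  then obtain q' t where q't: "emb q / emb a = emb q' / emb t" "q' \<in> P" "t \<notin> M"
    unfolding ext_ideal_localization[OF prime_ideal_is_ideal[OF P] M] by blast
  have "emb t * (emb q * d / emb a) = emb t * (emb q / emb a) * d"
    by simp
  also have "\<dots> = emb q' * d"
    using q't(1) prime_ideal_nonzero[OF M q't(3)] by (simp add: emb_eq_0_iff)
  finally show ?case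
    using q't(3) emb_mult_mem_ext_ideal[OF q't(2) gen(2)] by (intro exI[of _ t]) simp
next
  case (add x y)
  then obtain t t' where t: "t \<notin> M" "emb t * (x / emb a) \<in> ext_ideal P B"
    and t': "t' \<notin> M" "emb t' * (y / emb a) \<in> ext_ideal P B"
    by blast
  have subring: "subring B" and "emb t \<in> B" "emb t' \<in> B"
    using B by (simp_all add: overring_iff overring_emb)
  have "emb (t * t') * ((x + y) / emb a) = emb t' * (emb t * (x / emb a)) + emb t * (emb t' * (y / emb a))"
    by (simp add: emb_mult add_divide_distrib algebra_simps)
  also have "\<dots> \<in> ext_ideal P B"
    using ext_ideal_mult[OF subring \<open>emb t' \<in> B\<close> t(2)] ext_ideal_mult[OF subring \<open>emb t \<in> B\<close> t'(2)]
    by (rule ext_ideal_add)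
  finally show ?case
    using prime_ideal_mult[OF M t(1) t'(1)] by blast
qed

lemma locally_divided_imp_straight:
  assumes P: "prime_ideal P" and divided: "locally_divided P"
  shows "straight P"
  unfolding straight_def
proof (intro allI impI)
  fix B a b
  assume B: "overring B" and a: "a \<notin> P" and b: "b \<in> B" and ab: "emb a * b \<in> ext_ideal P B"
  define J where "J = {c. emb c * b \<in> ext_ideal P B}"
  have "is_ideal J"
  proof (unfold is_ideal_def J_def, intro conjI ballI allI)
    show "0 \<in> {c. emb c * b \<in> ext_ideal P B}"
      by (simp add: ext_ideal_zero)
    fix x y assume "x \<in> {c. emb c * b \<in> ext_ideal P B}" "y \<in> {c. emb c * b \<in> ext_ideal P B}"
    then show "x + y \<in> {c. emb c * b \<in> ext_ideal P B}"
      by (simp add: emb_add distrib_right ext_ideal_add)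
  next
    fix x r assume "x \<in> {c. emb c * b \<in> ext_ideal P B}"
    then show "r * x \<in> {c. emb c * b \<in> ext_ideal P B}"
      using ext_ideal_mult[of B "emb r"] B by (simp add: overring_iff overring_emb emb_mult mult.assoc)
  qed
  have "P \<subseteq> J"
    unfolding J_def using b by (auto intro: emb_mult_mem_ext_ideal)
  show "b \<in> ext_ideal P B"
  proof (rule ccontr)
    assume "b \<notin> ext_ideal P B"
    then have "1 \<notin> J"
      by (simp add: J_def)
    then obtain M where M: "maximal_ideal M" "J \<subseteq> M"
      using exists_maximal_ideal[OF \<open>is_ideal J\<close>] by blast
    with \<open>P \<subseteq> J\<close> have "P \<subseteq> M" "prime_ideal M"
      by (auto simp: maximal_ideal_imp_prime)
    then obtain t where "t \<notin> M" "emb t * (emb a * b / emb a) \<in> ext_ideal P B"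
      using ext_ideal_divide_clear_denominator[OF P _ _ B a ab] divided M(1)
      unfolding locally_divided_def by blast
    moreover have "emb a \<noteq> 0"
      using prime_ideal_nonzero[OF P a] by (simp add: emb_eq_0_iff)
    ultimately show False
      using M(2) by (auto simp: J_def)
  qed
qed

theorem theorem3p1:
  fixes P :: "'a::idom set"
  assumes "prime_ideal P"
  shows "straight P \<longleftrightarrow> locally_divided P"
  using straight_imp_locally_divided[OF assms] locally_divided_imp_straight[OF assms] by blast

end
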